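(* Let $D$ be an integral domain that is not a field. Then $D$ is a RAV-domain if and only if $D$ is an AV-domain and its integral closure $\overline{D}$ is a rational valuation domain.
   Context: For a domain $D$ that is not a field, an element $a\in D$ is an almost uniformizing parameter if for each nonzero nonunit $y\in D$ there are natural numbers $m,n$ and a unit $u$ of $D$ with $y^m=ua^n$; a RAV-domain (rational almost valuation domain) is a domain having an almost uniformizing parameter. An AV-domain is a domain in which for all nonzero $a,b$ there is $n\ge1$ with $a^n\mid b^n$ or $b^n\mid a^n$. A rational valuation domain is a valuation domain whose value group is order-isomorphic to a subgroup of $(\mathbb{Q},+)$. $\overline{D}$ is the integral closure of $D$ in its quotient field. *)

theory Defs
  imports "HOL-Computational_Algebra.Polynomial_Factorial"
begin

text \<open>D is a domain of type 'a :: idom; its quotient field is 'a fract, with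
  canonical embedding to_fract.\<close>

definition not_field :: "'a::idom itself \<Rightarrow> bool" where
  "not_field _ \<longleftrightarrow> (\<exists>x::'a. x \<noteq> 0 \<and> \<not> x dvd 1)"

definition almost_uniformizing :: "'a::idom \<Rightarrow> bool" where
  "almost_uniformizing a \<longleftrightarrow>
     (\<forall>y. y \<noteq> 0 \<and> \<not> y dvd 1 \<longrightarrow>
        (\<exists>m n u. m \<ge> 1 \<and> n \<ge> 1 \<and> u dvd 1 \<and> y ^ m = u * a ^ n))"

definition RAV_domain :: "'a::idom itself \<Rightarrow> bool" where
  "RAV_domain _ \<longleftrightarrow> (\<exists>a::'a. almost_uniformizing a)"

definition AV_domain :: "'a::idom itself \<Rightarrow> bool" where
  "AV_domain _ \<longleftrightarrow> (\<forall>a b::'a. a \<noteq> 0 \<longrightarrow> b \<noteq> 0 \<longrightarrow>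
      (\<exists>n\<ge>1. a ^ n dvd b ^ n \<or> b ^ n dvd a ^ n))"

definition integral_closure :: "'a::idom itself \<Rightarrow> 'a fract set" where
  "integral_closure _ = {x. \<exists>p::'a poly. lead_coeff p = 1 \<and>
      poly (map_poly to_fract p) x = 0}"

definition valuation_ring :: "'k::field set \<Rightarrow> bool" where
  "valuation_ring V \<longleftrightarrow> 0 \<in> V \<and> 1 \<in> V \<and>
     (\<forall>x\<in>V. \<forall>y\<in>V. x + y \<in> V \<and> x * y \<in> V \<and> - x \<in> V) \<and>
     (\<forall>x. x \<noteq> 0 \<longrightarrow> x \<in> V \<or> inverse x \<in> V)"

text \<open>Rational valuation domain: the value group K^*/U(V), ordered by
  divisibility in V, is order-isomorphic to a subgroup of (Q,+).  Equivalently
  (this is just the order embedding composed with the quotient map) there is a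
  valuation v: K^* \<rightarrow> Q, a group homomorphism whose nonnegative part is
  exactly V \ {0}.\<close>
definition rational_valuation_ring :: "'k::field set \<Rightarrow> bool" where
  "rational_valuation_ring V \<longleftrightarrow> valuation_ring V \<and>
     (\<exists>v :: 'k \<Rightarrow> rat.
        (\<forall>x y. x \<noteq> 0 \<longrightarrow> y \<noteq> 0 \<longrightarrow> v (x * y) = v x + v y) \<and>
        (\<forall>x. x \<noteq> 0 \<longrightarrow> (x \<in> V \<longleftrightarrow> v x \<ge> 0)))"

end

theory Submission
  imports Defs
begin

(* Forward direction: if a is almost uniformizing, the exponents in y^m = u a^n define a valuation
   v(y) = n/m of D that extends to a Q-valued valuation v of the quotient field K.  Every nonunit of D
   lies in the radical of aD, so 1 - e d is a unit for each nonunit e, and Nakayama's lemma for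
   D[t] = D + D t + ... + D t^(N-1) shows that no t with t^N = e is a unit of D[t]; hence integral
   elements have nonnegative value.  Conversely an element of nonnegative value has a power in D, so
   the integral closure is the valuation ring of v, and comparing values gives the AV property.
   Backward direction: the valuation of the integral closure is positive exactly on the nonunits of D.
   For nonunits y and a the values are commensurable, so y^m and a^n have the same value for some
   m, n >= 1, and the AV property makes suitable powers of them associated. *)

lemma to_fract_power [simp]: "to_fract (x ^ n) = to_fract x ^ n"
  by (induction n) simp_all

lemma fract_poly_power [simp]: "fract_poly (p ^ n) = fract_poly p ^ n"
  by (induction n) simp_all

lemma fract_poly_uminus [simp]: "fract_poly (- p) = - fract_poly p"
  by (rule poly_eqI) (simp add: coeff_map_poly)

lemma poly_fract_poly_to_fract [simp]: "poly (fract_poly p) (to_fract x) = to_fract (poly p x)"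
  by (induction p) (simp_all add: map_poly_pCons)

lemma fract_poly_reflect_poly: "fract_poly (reflect_poly p) = reflect_poly (fract_poly p)"
  by (rule poly_eqI) (simp add: coeff_reflect_poly coeff_map_poly degree_map_poly)

lemma shifted_power_in_integral_closure:
  assumes "N \<ge> 1" and "(x - to_fract b) ^ N = to_fract d"
  shows "x \<in> integral_closure TYPE('a::idom)"
proof -
  define p where "p = [:-d:] + [:-b, 1:] ^ N"
  have "lead_coeff ([:-b, 1:] ^ N) = 1"
    by (subst lead_coeff_power) simp
  then have "lead_coeff p = 1"
    unfolding p_def using assms(1) by (subst lead_coeff_add_le) (simp_all add: degree_linear_power)
  moreover have "poly (fract_poly p) x = 0"
    using assms(2) by (simp add: p_def map_poly_pCons)
  ultimately show ?thesis
    unfolding integral_closure_def by blast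
qed

lemma to_fract_in_integral_closure: "to_fract d \<in> integral_closure TYPE('a::idom)"
  by (rule shifted_power_in_integral_closure[of 1 _ d 0]) simp_all

lemma integral_closure_poly_of_inverse:
  fixes x :: "'a::idom fract"
  assumes "x \<in> integral_closure TYPE('a)" and "x \<noteq> 0"
  obtains q :: "'a poly" where "x = poly (fract_poly q) (inverse x)"
proof -
  obtain p :: "'a poly" where p: "lead_coeff p = 1" "poly (fract_poly p) x = 0"
    using assms(1) unfolding integral_closure_def by blast
  obtain r where r: "reflect_poly p = pCons 1 r"
    using p(1) coeff_0_reflect_poly[of p] by (cases "reflect_poly p") auto
  have "poly (fract_poly (reflect_poly p)) (inverse x) = 0"
    using p(2) assms(2) by (simp add: fract_poly_reflect_poly poly_reflect_poly_nz)
  then have "1 + inverse x * poly (fract_poly r) (inverse x) = 0"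
    by (simp add: r map_poly_pCons)
  then have "x = poly (fract_poly (- r)) (inverse x)"
    using assms(2) by (simp add: field_simps add_eq_0_iff2)
  then show ?thesis by (rule that)
qed

lemma unit_if_inverse_in_integral_closure:
  fixes d :: "'a::idom"
  assumes "d \<noteq> 0" and "inverse (to_fract d) \<in> integral_closure TYPE('a)"
  shows "d dvd 1"
proof -
  obtain q :: "'a poly" where "inverse (to_fract d) = to_fract (poly q d)"
    using integral_closure_poly_of_inverse[OF assms(2)] assms(1) by auto
  then have "to_fract (d * poly q d) = 1"
    using assms(1) by (simp add: field_simps)
  then have "d * poly q d = 1"
    by (metis to_fract_1 to_fract_eq_iff)
  then show ?thesis by (metis dvdI)
qed

lemma dvd_power_add_if_dvd_powers:
  fixes a x y :: "'a::comm_ring_1"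
  assumes "a dvd x ^ m" and "a dvd y ^ k"
  shows "a dvd (x + y) ^ (m + k)"
  unfolding binomial_ring
proof (rule dvd_sum)
  fix i assume "i \<in> {..m + k}"
  show "a dvd of_nat (m + k choose i) * x ^ i * y ^ (m + k - i)"
  proof (cases "m \<le> i")
    case True
    then have "a dvd x ^ i"
      using assms(1) le_imp_power_dvd dvd_trans by blast
    then show ?thesis
      by (simp add: mult.commute mult.left_commute)
  next
    case False
    then have "k \<le> m + k - i"
      by simp
    then have "a dvd y ^ (m + k - i)"
      using assms(2) le_imp_power_dvd dvd_trans by blast
    then show ?thesis
      by simp
  qed
qed

lemma rational_valuation_ringI:
  fixes v :: "'k::field \<Rightarrow> rat"
  assumes mult: "\<And>x y. x \<noteq> 0 \<Longrightarrow> y \<noteq> 0 \<Longrightarrow> v (x * y) = v x + v y"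
    and add: "\<And>x y. x \<noteq> 0 \<Longrightarrow> y \<noteq> 0 \<Longrightarrow> x + y \<noteq> 0 \<Longrightarrow> min (v x) (v y) \<le> v (x + y)"
  shows "rational_valuation_ring {x. x = 0 \<or> 0 \<le> v x}"
proof -
  let ?V = "{x. x = 0 \<or> 0 \<le> v x}"
  have one: "v 1 = 0"
    using mult[of 1 1] by simp
  have minus_one: "v (- 1) = 0"
    using mult[of "- 1" "- 1"] one by simp
  have "valuation_ring ?V"
    unfolding valuation_ring_def
  proof (intro conjI ballI allI impI)
    show "0 \<in> ?V" and "1 \<in> ?V"
      by (simp_all add: one)
  next
    fix x y assume "x \<in> ?V" and "y \<in> ?V"
    then show "x + y \<in> ?V" and "x * y \<in> ?V"
      using add[of x y] mult[of x y] by (cases "x = 0 \<or> y = 0"; force)+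
    show "- x \<in> ?V"
      using \<open>x \<in> ?V\<close> mult[of "- 1" x] minus_one by (cases "x = 0") auto
  next
    fix x :: 'k assume "x \<noteq> 0"
    then have "v x + v (inverse x) = 0"
      using mult[of x "inverse x"] one by simp
    then show "x \<in> ?V \<or> inverse x \<in> ?V"
      by auto
  qed
  then show ?thesis
    unfolding rational_valuation_ring_def using mult by auto
qed

lemma rat_commensurable:
  fixes r s :: rat
  assumes "0 < r" and "0 < s"
  obtains m n :: nat where "m \<ge> 1" and "n \<ge> 1" and "of_nat m * r = of_nat n * s"
proof -
  obtain p q where pq: "quotient_of (r / s) = (p, q)"
    by (cases "quotient_of (r / s)")
  have "q > 0"
    using quotient_of_denom_pos[OF pq] .
  moreover have rs: "r / s = of_int p / of_int q"
    using quotient_of_div[OF pq] .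
  moreover have "0 < r / s"
    using assms by simp
  ultimately have "p > 0"
    by (simp add: zero_less_divide_iff)
  show ?thesis
  proof (rule that[of "nat q" "nat p"])
    show "nat q \<ge> 1" and "nat p \<ge> 1"
      using \<open>q > 0\<close> \<open>p > 0\<close> by auto
    show "of_nat (nat q) * r = of_nat (nat p) * s"
      using rs \<open>q > 0\<close> \<open>p > 0\<close> assms(2) by (simp add: field_simps)
  qed
qed

definition fract_span :: "(nat \<Rightarrow> 'a::idom fract) \<Rightarrow> nat \<Rightarrow> 'a fract set" where
  "fract_span b n = range (\<lambda>c. \<Sum>k<n. to_fract (c k) * b k)"

lemma in_fract_spanI: "x = (\<Sum>k<n. to_fract (c k) * b k) \<Longrightarrow> x \<in> fract_span b n"
  unfolding fract_span_def by (rule range_eqI)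

lemma zero_in_fract_span: "0 \<in> fract_span b n"
  by (rule in_fract_spanI[where c = "\<lambda>_. 0"]) simp

lemma fract_span_add:
  assumes "x \<in> fract_span b n" and "y \<in> fract_span b n"
  shows "x + y \<in> fract_span b n"
proof -
  obtain c c' where "x = (\<Sum>k<n. to_fract (c k) * b k)" and "y = (\<Sum>k<n. to_fract (c' k) * b k)"
    using assms unfolding fract_span_def by blast
  then have "x + y = (\<Sum>k<n. to_fract (c k + c' k) * b k)"
    by (simp add: sum.distrib distrib_right)
  then show ?thesis
    by (rule in_fract_spanI)
qed

lemma fract_span_scale:
  assumes "x \<in> fract_span b n"
  shows "to_fract d * x \<in> fract_span b n"
proof -
  obtain c where "x = (\<Sum>k<n. to_fract (c k) * b k)"
    using assms unfolding fract_span_def by blast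
  then have "to_fract d * x = (\<Sum>k<n. to_fract (d * c k) * b k)"
    by (simp add: sum_distrib_left mult.assoc)
  then show ?thesis
    by (rule in_fract_spanI)
qed

lemma fract_span_Suc:
  "fract_span b (Suc n) = {s + to_fract c * b n | s c. s \<in> fract_span b n}"
proof safe
  fix y assume "y \<in> fract_span b (Suc n)"
  then obtain c where "y = (\<Sum>k<Suc n. to_fract (c k) * b k)"
    unfolding fract_span_def by blast
  then have "y = (\<Sum>k<n. to_fract (c k) * b k) + to_fract (c n) * b n"
    by simp
  then show "\<exists>s c. y = s + to_fract c * b n \<and> s \<in> fract_span b n"
    unfolding fract_span_def by blast
next
  fix s c assume "s \<in> fract_span b n"
  then obtain c' where "s = (\<Sum>k<n. to_fract (c' k) * b k)"
    unfolding fract_span_def by blast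
  then have "s + to_fract c * b n = (\<Sum>k<Suc n. to_fract ((c'(n := c)) k) * b k)"
    by simp
  then show "s + to_fract c * b n \<in> fract_span b (Suc n)"
    by (rule in_fract_spanI)
qed

lemma fract_span_zero_generators:
  assumes "\<forall>j<n. b j = 0" and "x \<in> fract_span b n"
  shows "x = 0"
  using assms unfolding fract_span_def by auto

(* The hypothesis on e says that e lies in the Jacobson radical of D. *)
lemma Nakayama_fract_span:
  fixes e :: "'a::idom"
  assumes jacobson: "\<And>d. (1 - e * d) dvd 1"
  shows "\<forall>j<n. \<exists>y\<in>fract_span b n. b j = to_fract e * y \<Longrightarrow> \<forall>j<n. b j = 0"
proof (induction n)
  case 0
  then show ?case by simp
next
  case (Suc n)
  have "\<exists>y\<in>fract_span b (Suc n). b n = to_fract e * y"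
    using Suc.prems by blast
  then obtain s c where s: "s \<in> fract_span b n" and bn: "b n = to_fract e * (s + to_fract c * b n)"
    unfolding fract_span_Suc by blast
  obtain w where w: "1 = (1 - e * c) * w"
    using jacobson by blast
  have "to_fract (1 - e * c) * b n = b n - to_fract e * (to_fract c * b n)"
    by (simp add: algebra_simps)
  also have "\<dots> = to_fract e * s"
    by (subst bn) (simp add: distrib_left)
  finally have eliminated: "to_fract (1 - e * c) * b n = to_fract e * s" .
  have "b n = to_fract ((1 - e * c) * w) * b n"
    by (simp flip: w)
  also have "\<dots> = to_fract w * (to_fract (1 - e * c) * b n)"
    by (simp only: to_fract_mult ac_simps)
  also have "\<dots> = to_fract e * (to_fract w * s)"
    unfolding eliminated by (rule mult.left_commute)
  finally have bn': "b n = to_fract e * (to_fract w * s)" .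
  then have "b n \<in> fract_span b n"
    by (simp only: fract_span_scale s)
  then have "fract_span b (Suc n) \<subseteq> fract_span b n"
    by (auto simp: fract_span_Suc intro: fract_span_add fract_span_scale)
  then have "\<forall>j<n. b j = 0"
    using Suc by (meson in_mono less_SucI)
  moreover have "b n = 0"
    using bn' fract_span_zero_generators[OF calculation s] by simp
  ultimately show ?case
    using less_Suc_eq by auto
qed

lemma to_fract_in_span_powers:
  assumes "N \<ge> 1"
  shows "to_fract d \<in> fract_span (\<lambda>k. t ^ k) N"
proof (rule in_fract_spanI[where c = "\<lambda>k. if k = 0 then d else 0"])
  obtain N' where N: "N = Suc N'"
    using assms by (cases N) auto
  show "to_fract d = (\<Sum>k<N. to_fract (if k = 0 then d else 0) * t ^ k)"
    unfolding N sum.lessThan_Suc_shift by simp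
qed

lemma mult_in_span_powers:
  assumes "N \<ge> 1" and "t ^ N = to_fract e" and "x \<in> fract_span (\<lambda>k. t ^ k) N"
  shows "t * x \<in> fract_span (\<lambda>k. t ^ k) N"
proof -
  obtain N' where N: "N = Suc N'"
    using assms(1) by (cases N) auto
  obtain c where x: "x = (\<Sum>k<N. to_fract (c k) * t ^ k)"
    using assms(3) unfolding fract_span_def by blast
  have "t * x = (\<Sum>k<N'. to_fract (c k) * t ^ Suc k) + to_fract (c N') * t ^ N"
    unfolding x N by (simp add: sum_distrib_left algebra_simps)
  also have "\<dots> = (\<Sum>k<N. to_fract (if k = 0 then c N' * e else c (k - 1)) * t ^ k)"
    unfolding N sum.lessThan_Suc_shift using assms(2) N by (simp add: algebra_simps)
  finally show ?thesis
    by (rule in_fract_spanI)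
qed

lemma poly_in_span_powers:
  assumes "N \<ge> 1" and "t ^ N = to_fract e"
  shows "poly (fract_poly p) t \<in> fract_span (\<lambda>k. t ^ k) N"
proof (induction p)
  case 0
  show ?case by (simp add: zero_in_fract_span)
next
  case (pCons c p)
  have "poly (fract_poly (pCons c p)) t = to_fract c + t * poly (fract_poly p) t"
    by (simp add: map_poly_pCons)
  also have "\<dots> \<in> fract_span (\<lambda>k. t ^ k) N"
    using assms pCons.IH
    by (intro fract_span_add to_fract_in_span_powers mult_in_span_powers)
  finally show ?case .
qed

(* Nakayama for D[t], which is spanned by 1, t, ..., t^(N-1): if t h = 1 then t^j = e t^j h^N. *)
lemma jacobson_root_not_unit_in_polys:
  fixes e :: "'a::idom" and t :: "'a fract"
  assumes jacobson: "\<And>d. (1 - e * d) dvd 1" and "N \<ge> 1" and "t ^ N = to_fract e"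
  shows "t * poly (fract_poly q) t \<noteq> 1"
proof
  assume inverse: "t * poly (fract_poly q) t = 1"
  have "\<forall>j<N. \<exists>y\<in>fract_span (\<lambda>k. t ^ k) N. t ^ j = to_fract e * y"
  proof (intro allI impI bexI)
    fix j
    have "t ^ j = t ^ j * (t * poly (fract_poly q) t) ^ N"
      by (simp add: inverse)
    also have "\<dots> = to_fract e * (t ^ j * poly (fract_poly q) t ^ N)"
      unfolding power_mult_distrib assms(3) by (simp only: ac_simps)
    also have "t ^ j * poly (fract_poly q) t ^ N = poly (fract_poly (monom 1 j * q ^ N)) t"
      by (simp add: map_poly_monom poly_monom)
    finally show "t ^ j = to_fract e * poly (fract_poly (monom 1 j * q ^ N)) t" .
    show "poly (fract_poly (monom 1 j * q ^ N)) t \<in> fract_span (\<lambda>k. t ^ k) N"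
      using assms(2,3) by (rule poly_in_span_powers)
  qed
  then have "\<forall>j<N. t ^ j = 0"
    by (rule Nakayama_fract_span[OF jacobson])
  then have "t ^ 0 = 0"
    using assms(2) by (metis less_one order_less_le_trans)
  then show False
    by simp
qed

locale almost_uniformizer =
  fixes a :: "'a::idom"
  assumes not_field: "not_field TYPE('a)"
    and uniformizing: "almost_uniformizing a"
begin

lemma uniformizer_nonzero: "a \<noteq> 0" and uniformizer_not_unit: "\<not> a dvd 1"
proof -
  obtain y :: 'a where y: "y \<noteq> 0" "\<not> y dvd 1"
    using not_field unfolding not_field_def by blast
  then obtain m n u where "m \<ge> 1" "n \<ge> 1" "u dvd 1" and y_power: "y ^ m = u * a ^ n"
    using uniformizing unfolding almost_uniformizing_def by blast
  show "a \<noteq> 0"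
    using y_power y(1) \<open>n \<ge> 1\<close> by (auto simp: power_0_left)
  show "\<not> a dvd 1"
  proof
    assume "a dvd 1"
    then have "a ^ n dvd 1"
      using dvd_power_same[of a 1 n] by simp
    then have "y ^ m dvd 1"
      unfolding y_power using mult_dvd_mono[OF \<open>u dvd 1\<close>] by fastforce
    moreover have "y dvd y ^ m"
      using \<open>m \<ge> 1\<close> by (simp add: dvd_power)
    ultimately show False
      using y(2) dvd_trans by blast
  qed
qed

lemma unit_times_power_eq_imp_eq:
  assumes "u dvd 1" and "w dvd 1" and "u * a ^ i = w * a ^ j"
  shows "i = j"
proof -
  have "i = j" if "i \<le> j" "u * a ^ i = w * a ^ j" "u dvd 1" for i j u w
  proof (rule ccontr)
    assume "i \<noteq> j"
    have "u * a ^ i = (w * a ^ (j - i)) * a ^ i"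
      using that(1,2) by (simp flip: power_add mult.assoc)
    then have "u = w * a ^ (j - i)"
      using uniformizer_nonzero by simp
    moreover have "a dvd a ^ (j - i)"
      using that(1) \<open>i \<noteq> j\<close> by (simp add: dvd_power)
    ultimately have "a dvd u"
      by simp
    then show False
      using that(3) uniformizer_not_unit dvd_trans by blast
  qed
  then show ?thesis
    using assms by (metis nat_le_linear)
qed

(* x^m is a unit of D times a^n / a^k; the value of x is then (n - k) / m. *)
definition val_rep :: "'a fract \<Rightarrow> nat \<Rightarrow> nat \<Rightarrow> nat \<Rightarrow> bool" where
  "val_rep x m k n \<longleftrightarrow> m \<ge> 1 \<and> (\<exists>u. u dvd 1 \<and> x ^ m * to_fract (a ^ k) = to_fract (u * a ^ n))"

lemma val_rep_scale:
  assumes "val_rep x m k n" and "j \<ge> 1"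
  shows "val_rep x (m * j) (k * j) (n * j)"
proof -
  obtain u where "u dvd 1" and eq: "x ^ m * to_fract (a ^ k) = to_fract (u * a ^ n)"
    using assms(1) unfolding val_rep_def by blast
  have "x ^ (m * j) * to_fract (a ^ (k * j)) = to_fract (u ^ j * a ^ (n * j))"
    using arg_cong[OF eq, of "\<lambda>y. y ^ j"] by (simp add: power_mult power_mult_distrib)
  moreover have "u ^ j dvd 1"
    using dvd_power_same[OF \<open>u dvd 1\<close>, of j] by simp
  ultimately show ?thesis
    using assms unfolding val_rep_def by auto
qed

lemma val_rep_shift:
  assumes "val_rep x m k n"
  shows "val_rep x m (k + i) (n + i)"
proof -
  obtain u where "u dvd 1" and eq: "x ^ m * to_fract (a ^ k) = to_fract (u * a ^ n)"
    using assms unfolding val_rep_def by blast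
  have "x ^ m * to_fract (a ^ (k + i)) = to_fract (u * a ^ (n + i))"
    using arg_cong[OF eq, of "\<lambda>y. y * to_fract (a ^ i)"] by (simp add: power_add ac_simps)
  then show ?thesis
    using assms \<open>u dvd 1\<close> unfolding val_rep_def by auto
qed

lemma val_rep_unique_same:
  assumes "val_rep x m k n" and "val_rep x m k n'"
  shows "n = n'"
proof -
  obtain u u' where "u dvd 1" "u' dvd 1"
    and "x ^ m * to_fract (a ^ k) = to_fract (u * a ^ n)"
    and "x ^ m * to_fract (a ^ k) = to_fract (u' * a ^ n')"
    using assms unfolding val_rep_def by blast
  then have "to_fract (u * a ^ n) = to_fract (u' * a ^ n')"
    by (simp only:)
  then have "u * a ^ n = u' * a ^ n'"
    by (simp only: to_fract_eq_iff)
  then show ?thesis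
    using \<open>u dvd 1\<close> \<open>u' dvd 1\<close> unit_times_power_eq_imp_eq by blast
qed

lemma val_rep_unique:
  assumes "val_rep x m k n" and "val_rep x m' k' n'"
  shows "n * m' + k' * m = n' * m + k * m'"
proof -
  have "m \<ge> 1" "m' \<ge> 1"
    using assms unfolding val_rep_def by auto
  have "val_rep x (m * m') (k * m' + k' * m) (n * m' + k' * m)"
    using val_rep_shift[OF val_rep_scale[OF assms(1) \<open>m' \<ge> 1\<close>]] .
  moreover have "val_rep x (m * m') (k * m' + k' * m) (n' * m + k * m')"
    using val_rep_shift[OF val_rep_scale[OF assms(2) \<open>m \<ge> 1\<close>], of "k * m'"]
    by (simp add: ac_simps)
  ultimately show ?thesis
    by (rule val_rep_unique_same)
qed

definition val :: "'a fract \<Rightarrow> rat" where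
  "val x = (SOME r. \<exists>m k n. val_rep x m k n \<and> r = (of_nat n - of_nat k) / of_nat m)"

lemma val_eq:
  assumes "val_rep x m k n"
  shows "val x = (of_nat n - of_nat k) / of_nat m"
proof -
  obtain m' k' n' where rep': "val_rep x m' k' n'"
    and val: "val x = (of_nat n' - of_nat k') / of_nat m'"
    using someI_ex[of "\<lambda>r. \<exists>m k n. val_rep x m k n \<and> r = (of_nat n - of_nat k) / of_nat m"] assms
    unfolding val_def by blast
  have "m \<ge> 1" "m' \<ge> 1"
    using assms rep' unfolding val_rep_def by auto
  have "n' * m + k * m' = n * m' + k' * m"
    using val_rep_unique[OF rep' assms] by simp
  then have cross: "(of_nat n' * of_nat m + of_nat k * of_nat m' :: rat) = of_nat n * of_nat m' + of_nat k' * of_nat m"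
    by (metis of_nat_add of_nat_mult)
  have val': "of_nat m' * val x = of_nat n' - of_nat k'"
    using val \<open>m' \<ge> 1\<close> by simp
  have "of_nat m' * (of_nat m * val x) = of_nat m * (of_nat m' * val x)"
    by (simp only: ac_simps)
  also have "\<dots> = of_nat m' * (of_nat n - of_nat k)"
    unfolding val' using cross by (simp add: algebra_simps)
  finally have "of_nat m * val x = of_nat n - of_nat k"
    using \<open>m' \<ge> 1\<close> by simp
  then show ?thesis
    using \<open>m \<ge> 1\<close> by (simp add: field_simps)
qed

lemma val_rep_to_fract:
  assumes "d \<noteq> 0"
  shows "\<exists>m n. val_rep (to_fract d) m 0 n"
proof (cases "d dvd 1")
  case True
  then have "val_rep (to_fract d) 1 0 0"
    unfolding val_rep_def by auto
  then show ?thesis by blast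
next
  case False
  then obtain m n u where "m \<ge> 1" "u dvd 1" "d ^ m = u * a ^ n"
    using assms uniformizing unfolding almost_uniformizing_def by blast
  then have "val_rep (to_fract d) m 0 n"
    unfolding val_rep_def by (auto simp flip: to_fract_power)
  then show ?thesis by blast
qed

lemma val_rep_mult:
  assumes "val_rep x m k n" and "val_rep y m k' n'"
  shows "val_rep (x * y) m (k + k') (n + n')"
proof -
  obtain u u' where "u dvd 1" "u' dvd 1"
    and x: "x ^ m * to_fract (a ^ k) = to_fract (u * a ^ n)"
    and y: "y ^ m * to_fract (a ^ k') = to_fract (u' * a ^ n')"
    using assms unfolding val_rep_def by blast
  have "(x * y) ^ m * to_fract (a ^ (k + k')) = (x ^ m * to_fract (a ^ k)) * (y ^ m * to_fract (a ^ k'))"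
    by (simp add: power_mult_distrib power_add ac_simps)
  also have "\<dots> = to_fract ((u * u') * a ^ (n + n'))"
    unfolding x y by (simp add: power_add ac_simps)
  finally have "(x * y) ^ m * to_fract (a ^ (k + k')) = to_fract ((u * u') * a ^ (n + n'))" .
  moreover have "u * u' dvd 1"
    using mult_dvd_mono[OF \<open>u dvd 1\<close> \<open>u' dvd 1\<close>] by simp
  ultimately show ?thesis
    using assms unfolding val_rep_def by blast
qed

lemma val_rep_inverse:
  assumes "val_rep x m k n"
  shows "val_rep (inverse x) m n k"
proof -
  obtain u where "u dvd 1" and eq: "x ^ m * to_fract (a ^ k) = to_fract (u * a ^ n)"
    using assms unfolding val_rep_def by blast
  then obtain w where w: "u * w = 1"
    by (metis dvdE)
  have "x \<noteq> 0"
  proof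
    assume "x = 0"
    moreover have "m \<ge> 1"
      using assms unfolding val_rep_def by simp
    ultimately have "to_fract (u * a ^ n) = 0"
      using eq by (simp add: power_0_left)
    then show False
      using w uniformizer_nonzero by auto
  qed
  have "inverse x ^ m * to_fract (a ^ n) = inverse x ^ m * to_fract ((u * w) * a ^ n)"
    by (simp add: w)
  also have "\<dots> = to_fract w * (inverse x ^ m * (x ^ m * to_fract (a ^ k)))"
    unfolding eq by (simp add: ac_simps)
  also have "\<dots> = to_fract (w * a ^ k)"
    using \<open>x \<noteq> 0\<close> by (simp add: power_inverse field_simps)
  finally show ?thesis
    using assms w unfolding val_rep_def by (metis dvdI mult.commute)
qed

lemma val_rep_exists:
  assumes "x \<noteq> 0"
  shows "\<exists>m k n. val_rep x m k n"
proof -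
  obtain p q where "x = Fract p q" "p \<noteq> 0" "q \<noteq> 0"
    using assms by (cases x rule: Fract_cases_nonzero) auto
  then have x: "x = to_fract p * inverse (to_fract q)"
    by (simp add: Fract_conv_to_fract divide_inverse)
  obtain m n m' n' where p: "val_rep (to_fract p) m 0 n" and q: "val_rep (to_fract q) m' 0 n'"
    using val_rep_to_fract \<open>p \<noteq> 0\<close> \<open>q \<noteq> 0\<close> by meson
  have "m \<ge> 1" "m' \<ge> 1"
    using p q unfolding val_rep_def by auto
  have "val_rep (to_fract p) (m * m') 0 (n * m')"
    using val_rep_scale[OF p \<open>m' \<ge> 1\<close>] by simp
  moreover have "val_rep (inverse (to_fract q)) (m * m') (n' * m) 0"
    using val_rep_scale[OF val_rep_inverse[OF q] \<open>m \<ge> 1\<close>] by (simp add: mult.commute)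
  ultimately have "val_rep x (m * m') (0 + n' * m) (n * m' + 0)"
    unfolding x by (rule val_rep_mult)
  then show ?thesis
    by blast
qed

lemma val_mult:
  assumes "x \<noteq> 0" and "y \<noteq> 0"
  shows "val (x * y) = val x + val y"
proof -
  obtain m k n m' k' n' where x: "val_rep x m k n" and y: "val_rep y m' k' n'"
    using val_rep_exists assms by meson
  have "m \<ge> 1" "m' \<ge> 1"
    using x y unfolding val_rep_def by auto
  have "val_rep x (m * m') (k * m') (n * m')"
    using x \<open>m' \<ge> 1\<close> by (rule val_rep_scale)
  moreover have "val_rep y (m * m') (k' * m) (n' * m)"
    using val_rep_scale[OF y \<open>m \<ge> 1\<close>] by (simp add: mult.commute)
  ultimately have "val_rep (x * y) (m * m') (k * m' + k' * m) (n * m' + n' * m)"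
    by (rule val_rep_mult)
  then show ?thesis
    using \<open>m \<ge> 1\<close> \<open>m' \<ge> 1\<close> by (simp add: val_eq[OF x] val_eq[OF y] val_eq field_simps)
qed

lemma val_inverse:
  assumes "x \<noteq> 0"
  shows "val (inverse x) = - val x"
proof -
  obtain m k n where "val_rep x m k n"
    using val_rep_exists assms by blast
  then show ?thesis
    using val_eq val_rep_inverse by (simp add: minus_divide_left)
qed

lemma val_nonneg_power:
  assumes "x \<noteq> 0" and "0 \<le> val x"
  obtains N u n where "N \<ge> 1" and "u dvd 1" and "x ^ N = to_fract (u * a ^ n)"
    and "val x = of_nat n / of_nat N"
proof -
  obtain m k n where rep: "val_rep x m k n"
    using val_rep_exists assms(1) by blast
  then obtain u where "m \<ge> 1" "u dvd 1" and eq: "x ^ m * to_fract (a ^ k) = to_fract (u * a ^ n)"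
    unfolding val_rep_def by blast
  have val: "val x = (of_nat n - of_nat k) / of_nat m"
    by (rule val_eq[OF rep])
  then have "k \<le> n"
    using assms(2) \<open>m \<ge> 1\<close> by (simp add: zero_le_divide_iff)
  then have "a ^ n = a ^ (n - k) * a ^ k"
    by (simp flip: power_add)
  then have "x ^ m * to_fract (a ^ k) = to_fract (u * a ^ (n - k)) * to_fract (a ^ k)"
    unfolding eq by (simp add: ac_simps)
  then have "x ^ m = to_fract (u * a ^ (n - k))"
    using uniformizer_nonzero by simp
  moreover have "val x = of_nat (n - k) / of_nat m"
    using val \<open>k \<le> n\<close> by (simp add: of_nat_diff)
  ultimately show ?thesis
    using that \<open>m \<ge> 1\<close> \<open>u dvd 1\<close> by blast
qed

lemma nonunit_dvd_power:
  assumes "\<not> y dvd 1"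
  obtains m where "a dvd y ^ m"
proof (cases "y = 0")
  case True
  then show ?thesis
    using that[of 1] by simp
next
  case False
  then obtain m n u where "n \<ge> 1" "y ^ m = u * a ^ n"
    using assms uniformizing unfolding almost_uniformizing_def by blast
  then have "a dvd y ^ m"
    by (simp add: dvd_power)
  then show ?thesis
    by (rule that)
qed

lemma one_minus_mult_unit:
  fixes e d :: 'a
  assumes "\<not> e dvd 1"
  shows "(1 - e * d) dvd 1"
proof (rule ccontr)
  assume "\<not> (1 - e * d) dvd 1"
  then obtain m where "a dvd (1 - e * d) ^ m"
    by (rule nonunit_dvd_power)
  moreover have "\<not> (e * d) dvd 1"
    using assms dvd_mult_left by blast
  then obtain k where "a dvd (e * d) ^ k"
    by (rule nonunit_dvd_power)
  ultimately have "a dvd ((1 - e * d) + e * d) ^ (m + k)"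
    by (rule dvd_power_add_if_dvd_powers)
  then show False
    using uniformizer_not_unit by simp
qed

lemma integral_imp_val_nonneg:
  assumes "x \<in> integral_closure TYPE('a)" and "x \<noteq> 0"
  shows "0 \<le> val x"
proof (rule ccontr)
  assume "\<not> 0 \<le> val x"
  then have val_pos: "0 < val (inverse x)"
    using val_inverse assms(2) by simp
  then obtain N u n where "N \<ge> 1" "u dvd 1" and power: "inverse x ^ N = to_fract (u * a ^ n)"
    and val: "val (inverse x) = of_nat n / of_nat N"
    using val_nonneg_power[of "inverse x"] assms(2) by auto
  have "n \<ge> 1"
    using val val_pos by (cases n) auto
  then have "a dvd u * a ^ n"
    by (simp add: dvd_power)
  then have "\<not> (u * a ^ n) dvd 1"
    using uniformizer_not_unit dvd_trans by blast
  then have "inverse x * poly (fract_poly q) (inverse x) \<noteq> 1" for q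
    using one_minus_mult_unit \<open>N \<ge> 1\<close> power by (intro jacobson_root_not_unit_in_polys)
  moreover obtain q where "x = poly (fract_poly q) (inverse x)"
    using integral_closure_poly_of_inverse[OF assms] .
  ultimately show False
    using assms(2) by (metis left_inverse)
qed

lemma val_nonneg_imp_integral:
  assumes "x \<noteq> 0" and "0 \<le> val x"
  shows "x \<in> integral_closure TYPE('a)"
proof -
  obtain N u n where "N \<ge> 1" and "x ^ N = to_fract (u * a ^ n)"
    using val_nonneg_power assms by blast
  then show ?thesis
    by (intro shifted_power_in_integral_closure[where b = 0 and d = "u * a ^ n"]) simp_all
qed

lemma integral_closure_eq_val_nonneg:
  "integral_closure TYPE('a) = {x. x = 0 \<or> 0 \<le> val x}"
proof (intro set_eqI)
  fix x
  show "x \<in> integral_closure TYPE('a) \<longleftrightarrow> x \<in> {x. x = 0 \<or> 0 \<le> val x}"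
    using integral_imp_val_nonneg val_nonneg_imp_integral to_fract_in_integral_closure[of 0]
    by (cases "x = 0") auto
qed

lemma val_add:
  assumes "x \<noteq> 0" and "y \<noteq> 0" and "x + y \<noteq> 0"
  shows "min (val x) (val y) \<le> val (x + y)"
proof -
  have "val y \<le> val (x + y)" if "val y \<le> val x" "x \<noteq> 0" "y \<noteq> 0" "x + y \<noteq> 0" for x y
  proof -
    define t where "t = x / y"
    have "t \<noteq> 0" and "0 \<le> val t"
      using that val_mult[of x "inverse y"] val_inverse[of y] by (auto simp: t_def divide_inverse)
    then obtain N u n where "N \<ge> 1" and "t ^ N = to_fract (u * a ^ n)"
      by (rule val_nonneg_power)
    then have "1 + t \<in> integral_closure TYPE('a)"
      by (intro shifted_power_in_integral_closure[where b = 1 and d = "u * a ^ n"]) simp_all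
    moreover have sum: "x + y = y * (1 + t)"
      using that(3) by (simp add: t_def field_simps)
    then have "1 + t \<noteq> 0"
      using that(4) by auto
    ultimately have "0 \<le> val (1 + t)"
      by (rule integral_imp_val_nonneg)
    then show ?thesis
      using sum val_mult[OF that(3) \<open>1 + t \<noteq> 0\<close>] by simp
  qed
  then show ?thesis
    using assms by (metis add.commute min.coboundedI1 min.coboundedI2 linorder_linear)
qed

lemma power_dvd_power_if_val_le:
  assumes "y \<noteq> 0" and "z \<noteq> 0" and "val (to_fract z) \<le> val (to_fract y)"
  shows "\<exists>N\<ge>1. z ^ N dvd y ^ N"
proof -
  have "0 \<le> val (to_fract y / to_fract z)"
    using assms val_mult val_inverse by (simp add: divide_inverse)
  then obtain N u n where "N \<ge> 1" and "(to_fract y / to_fract z) ^ N = to_fract (u * a ^ n)"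
    using val_nonneg_power assms(1,2) by (metis divide_eq_0_iff to_fract_eq_0_iff)
  then have "to_fract (y ^ N) = to_fract (u * a ^ n * z ^ N)"
    using assms(2) by (simp add: power_divide field_simps)
  then have "y ^ N = (u * a ^ n) * z ^ N"
    by (simp only: to_fract_eq_iff)
  then show ?thesis
    using \<open>N \<ge> 1\<close> by (metis dvd_triv_right)
qed

lemma is_AV_domain: "AV_domain TYPE('a)"
  unfolding AV_domain_def using power_dvd_power_if_val_le by (metis linorder_linear)

lemma rational_valuation_integral_closure:
  "rational_valuation_ring (integral_closure TYPE('a))"
  unfolding integral_closure_eq_val_nonneg using val_mult val_add by (rule rational_valuation_ringI)

end

locale integral_closure_valuation =
  fixes v :: "'a::idom fract \<Rightarrow> rat"
  assumes v_mult: "\<And>x y. x \<noteq> 0 \<Longrightarrow> y \<noteq> 0 \<Longrightarrow> v (x * y) = v x + v y"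
    and integral_iff_v_nonneg: "\<And>x. x \<noteq> 0 \<Longrightarrow> x \<in> integral_closure TYPE('a) \<longleftrightarrow> 0 \<le> v x"
begin

lemma v_one: "v 1 = 0"
  using v_mult[of 1 1] by simp

lemma v_power: "x \<noteq> 0 \<Longrightarrow> v (x ^ n) = of_nat n * v x"
  by (induction n) (simp_all add: v_one v_mult algebra_simps)

lemma v_to_fract_nonneg: "d \<noteq> 0 \<Longrightarrow> 0 \<le> v (to_fract d)"
  using integral_iff_v_nonneg[of "to_fract d"] to_fract_in_integral_closure[of d] by simp

lemma unit_iff_v_zero:
  assumes "d \<noteq> 0"
  shows "d dvd 1 \<longleftrightarrow> v (to_fract d) = 0"
proof
  assume "d dvd 1"
  then obtain d' where d': "1 = d * d'"
    by (rule dvdE)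
  then have "d' \<noteq> 0"
    by auto
  then have "v (to_fract d) + v (to_fract d') = 0"
    using v_mult[of "to_fract d" "to_fract d'"] assms v_one by (simp flip: to_fract_mult d')
  moreover note \<open>d' \<noteq> 0\<close>
  ultimately show "v (to_fract d) = 0"
    using v_to_fract_nonneg assms by (metis add_nonneg_eq_0_iff)
next
  assume "v (to_fract d) = 0"
  then have "v (inverse (to_fract d)) = 0"
    using v_mult[of "to_fract d" "inverse (to_fract d)"] v_one assms by simp
  then have "inverse (to_fract d) \<in> integral_closure TYPE('a)"
    using integral_iff_v_nonneg assms by simp
  with assms show "d dvd 1"
    by (rule unit_if_inverse_in_integral_closure)
qed

lemma v_pos_if_not_unit:
  assumes "d \<noteq> 0" and "\<not> d dvd 1"
  shows "0 < v (to_fract d)"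
  using v_to_fract_nonneg[OF assms(1)] unit_iff_v_zero[OF assms(1)] assms(2) by simp

lemma associated_if_dvd_and_v_eq:
  assumes "y \<noteq> 0" and "z \<noteq> 0" and "y dvd z \<or> z dvd y" and "v (to_fract y) = v (to_fract z)"
  shows "\<exists>u. u dvd 1 \<and> y = u * z"
proof -
  have unit: "w dvd 1" if "y' = z' * w" "y' \<noteq> 0" "v (to_fract y') = v (to_fract z')" for y' z' w
  proof -
    have "z' \<noteq> 0" "w \<noteq> 0"
      using that by auto
    then have "v (to_fract w) = 0"
      using that v_mult[of "to_fract z'" "to_fract w"] by simp
    then show ?thesis
      using unit_iff_v_zero \<open>w \<noteq> 0\<close> by blast
  qed
  from assms(3) show ?thesis
  proof
    assume "y dvd z"
    then obtain w where w: "z = y * w" ..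
    then have "w dvd 1"
      using unit assms by simp
    then obtain w' where "1 = w * w'" ..
    then have "y = w' * z"
      by (simp add: w mult.commute mult.left_commute)
    then show ?thesis
      using \<open>1 = w * w'\<close> by (metis dvdI mult.commute)
  next
    assume "z dvd y"
    then obtain w where "y = z * w" ..
    then show ?thesis
      using unit assms by (metis mult.commute)
  qed
qed

lemma almost_uniformizing_if_AV:
  fixes a :: 'a
  assumes AV: "AV_domain TYPE('a)" and "a \<noteq> 0" and "\<not> a dvd 1"
  shows "almost_uniformizing a"
  unfolding almost_uniformizing_def
proof (intro allI impI, elim conjE)
  fix y :: 'a assume "y \<noteq> 0" and "\<not> y dvd 1"
  have "0 < v (to_fract y)" and "0 < v (to_fract a)"
    using \<open>y \<noteq> 0\<close> \<open>\<not> y dvd 1\<close> assms(2,3) by (simp_all add: v_pos_if_not_unit)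
  then obtain m n where "m \<ge> 1" "n \<ge> 1" and mn: "of_nat m * v (to_fract y) = of_nat n * v (to_fract a)"
    by (rule rat_commensurable)
  obtain k where "k \<ge> 1" and dvd: "(y ^ m) ^ k dvd (a ^ n) ^ k \<or> (a ^ n) ^ k dvd (y ^ m) ^ k"
    using AV \<open>y \<noteq> 0\<close> \<open>a \<noteq> 0\<close> unfolding AV_domain_def by (meson power_not_zero)
  have "v (to_fract ((y ^ m) ^ k)) = v (to_fract ((a ^ n) ^ k))"
    using mn \<open>y \<noteq> 0\<close> \<open>a \<noteq> 0\<close> by (simp add: v_power)
  then obtain u where "u dvd 1" and "(y ^ m) ^ k = u * (a ^ n) ^ k"
    using associated_if_dvd_and_v_eq dvd \<open>y \<noteq> 0\<close> \<open>a \<noteq> 0\<close> by (meson power_not_zero)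
  moreover have "m * k \<ge> 1" and "n * k \<ge> 1"
    using \<open>m \<ge> 1\<close> \<open>n \<ge> 1\<close> \<open>k \<ge> 1\<close> by simp_all
  ultimately show "\<exists>m n u. m \<ge> 1 \<and> n \<ge> 1 \<and> u dvd 1 \<and> y ^ m = u * a ^ n"
    by (metis power_mult)
qed

end

theorem theorem11:
  assumes "not_field TYPE('a::idom)"
  shows "RAV_domain TYPE('a) \<longleftrightarrow>
           (AV_domain TYPE('a) \<and> rational_valuation_ring (integral_closure TYPE('a)))"
proof
  assume "RAV_domain TYPE('a)"
  then obtain a :: 'a where "almost_uniformizing a"
    unfolding RAV_domain_def by blast
  with assms interpret almost_uniformizer a
    by unfold_locales
  show "AV_domain TYPE('a) \<and> rational_valuation_ring (integral_closure TYPE('a))"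
    using is_AV_domain rational_valuation_integral_closure by blast
next
  assume "AV_domain TYPE('a) \<and> rational_valuation_ring (integral_closure TYPE('a))"
  then have AV: "AV_domain TYPE('a)" and "rational_valuation_ring (integral_closure TYPE('a))"
    by blast+
  then obtain v :: "'a fract \<Rightarrow> rat" where "integral_closure_valuation v"
    unfolding rational_valuation_ring_def integral_closure_valuation_def by blast
  then interpret integral_closure_valuation v .
  obtain a :: 'a where "a \<noteq> 0" and "\<not> a dvd 1"
    using assms unfolding not_field_def by blast
  with AV have "almost_uniformizing a"
    by (rule almost_uniformizing_if_AV)
  then show "RAV_domain TYPE('a)"
    unfolding RAV_domain_def by blast
qed

end
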